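(* For non-negative integers $n,k,\alpha,\beta$, $$\genfrac{\lfloor}{\rfloor}{0pt}{}{n+k}{n}^{\alpha,\beta}=\sum_{1\le i_1\le i_2\le\cdots\le i_k\le n}\ \prod_{j=1}^{k}\big((\alpha+\beta)i_j+\alpha(j-1)\big)=\sum_{1\le i_1\le\cdots\le i_k\le n}(\alpha+\beta)i_1\big((\alpha+\beta)i_2+\alpha\big)\cdots\big((\alpha+\beta)i_k+\alpha(k-1)\big).$$
   Context: For parameters $\alpha,\beta$, the generalized Stirling numbers $\genfrac{\lfloor}{\rfloor}{0pt}{}{n}{k}^{\alpha,\beta}$, $0\le k\le n$, are defined by the polynomial identity in $x$ $$x(x+\alpha)\cdots(x+(n-1)\alpha)=\sum_{k=0}^{n}\genfrac{\lfloor}{\rfloor}{0pt}{}{n}{k}^{\alpha,\beta}\,x(x-\beta)\cdots(x-(k-1)\beta),$$ (empty products equal $1$), and $\genfrac{\lfloor}{\rfloor}{0pt}{}{n}{k}^{\alpha,\beta}=0$ for $k<0$ or $k>n$. An empty sum is $0$ and an empty product is $1$ (so for $k=0$ the right-hand side equals $1$). *)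

theory Defs
  imports Complex_Main
begin

definition gstirling :: "real \<Rightarrow> real \<Rightarrow> nat \<Rightarrow> nat \<Rightarrow> real" where
  "gstirling a b n k =
     (if k \<le> n then
        (THE c :: nat \<Rightarrow> real.
            (\<forall>x::real. (\<Prod>i<n. x + real i * a) = (\<Sum>j\<le>n. c j * (\<Prod>i<j. x - real i * b)))
          \<and> (\<forall>j>n. c j = 0)) k
      else 0)"

definition weak_seqs :: "nat \<Rightarrow> nat \<Rightarrow> (nat \<Rightarrow> nat) set" where
  "weak_seqs k n = {i. (\<forall>j\<in>{1..k}. 1 \<le> i j \<and> i j \<le> n)
                      \<and> (\<forall>j\<in>{1..<k}. i j \<le> i (Suc j))
                      \<and> (\<forall>j. j \<notin> {1..k} \<longrightarrow> i j = 0)}"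

end

theory Submission
  imports Defs "HOL-Computational_Algebra.Polynomial"
begin

text \<open>The coefficients of x(x+a)\<dots>(x+(n-1)a) in the basis x(x-b)\<dots>(x-(j-1)b) obey the
  triangular recurrence S(n+1,k) = S(n,k-1) + (kb + na) S(n,k), because
  x + na = (x - kb) + (kb + na).  Both sides of the theorem satisfy this recurrence in the
  shifted form T(n,k) = S(n+k,n): splitting the weakly increasing sequences of length k+1
  bounded by n+1 according to whether the last entry equals n+1 gives
  T(n+1,k+1) = T(n,k+1) + ((a+b)(n+1) + ak) T(n+1,k).\<close>

fun gen_stirling :: "'a::comm_semiring_1 \<Rightarrow> 'a \<Rightarrow> nat \<Rightarrow> nat \<Rightarrow> 'a" where
  "gen_stirling a b 0 k = (if k = 0 then 1 else 0)"
| "gen_stirling a b (Suc n) k =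
     (case k of 0 \<Rightarrow> 0 | Suc k' \<Rightarrow> gen_stirling a b n k') + (of_nat k * b + of_nat n * a) * gen_stirling a b n k"

lemma gen_stirling_eq_0: "n < k \<Longrightarrow> gen_stirling a b n k = 0"
  by (induction n arbitrary: k) (auto split: nat.splits)

lemma gen_stirling_diag [simp]: "gen_stirling a b n n = 1"
  by (induction n) (auto simp: gen_stirling_eq_0)

lemma gen_stirling_Suc_0 [simp]: "gen_stirling a b (Suc n) 0 = 0"
  by (induction n) auto

lemma of_nat_gen_stirling:
  "of_nat (gen_stirling a b n k) = gen_stirling (of_nat a) (of_nat b) n k"
  by (induction n arbitrary: k) (simp_all split: nat.split)

lemma prod_rising_eq_sum_gen_stirling:
  fixes a b x :: "'a::comm_ring_1"
  shows "(\<Prod>i<n. x + of_nat i * a) = (\<Sum>j\<le>n. gen_stirling a b n j * (\<Prod>i<j. x - of_nat i * b))"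
proof (induction n)
  case 0
  then show ?case by simp
next
  case (Suc n)
  define P where "P j = (\<Prod>i<j. x - of_nat i * b)" for j
  have "(\<Prod>i<Suc n. x + of_nat i * a) = (\<Sum>j\<le>n. gen_stirling a b n j * P j * (x + of_nat n * a))"
    using Suc by (simp add: P_def sum_distrib_right)
  also have "\<dots> = (\<Sum>j\<le>n. gen_stirling a b n j * P (Suc j)
                     + (of_nat j * b + of_nat n * a) * gen_stirling a b n j * P j)"
    by (rule sum.cong) (simp_all add: P_def algebra_simps)
  also have "\<dots> = (\<Sum>j\<le>n. gen_stirling a b n j * P (Suc j))
                 + (\<Sum>j\<le>n. (of_nat j * b + of_nat n * a) * gen_stirling a b n j * P j)"
    by (simp add: sum.distrib)
  also have "(\<Sum>j\<le>n. gen_stirling a b n j * P (Suc j))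
      = (\<Sum>j\<le>Suc n. (case j of 0 \<Rightarrow> 0 | Suc j' \<Rightarrow> gen_stirling a b n j') * P j)"
    by (subst sum.atMost_Suc_shift) simp
  also have "(\<Sum>j\<le>n. (of_nat j * b + of_nat n * a) * gen_stirling a b n j * P j)
      = (\<Sum>j\<le>Suc n. (of_nat j * b + of_nat n * a) * gen_stirling a b n j * P j)"
    by (simp add: gen_stirling_eq_0)
  finally show ?case
    by (simp add: P_def sum.distrib[symmetric] algebra_simps)
qed

text \<open>The products \<Prod>i<j. (x - c i) have degree j and leading coefficient 1, so comparing
  top coefficients peels off the coefficients one at a time.\<close>

lemma newton_basis_coeffs_eq_0:
  fixes d c :: "nat \<Rightarrow> 'a::{idom,ring_char_0}"
  assumes "\<forall>x. (\<Sum>j\<le>N. d j * (\<Prod>i<j. x - c i)) = 0" and "j \<le> N"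
  shows "d j = 0"
  using assms
proof (induction N arbitrary: j)
  case 0
  then show ?case by simp
next
  case (Suc N)
  define p where "p j = (\<Prod>i<j. [:- c i, 1:])" for j
  have coeff_p: "coeff (p j) (Suc N) = (if j = Suc N then 1 else 0)" if "j \<le> Suc N" for j
  proof -
    have "degree (p j) = j" unfolding p_def by (subst degree_prod_sum_eq) auto
    moreover have "lead_coeff (p j) = 1" unfolding p_def by (simp add: lead_coeff_prod)
    ultimately show ?thesis using that by (auto intro: coeff_eq_0)
  qed
  define Q where "Q = (\<Sum>j\<le>Suc N. smult (d j) (p j))"
  have "poly Q x = (\<Sum>j\<le>Suc N. d j * (\<Prod>i<j. x - c i))" for x
    unfolding Q_def p_def poly_sum poly_smult poly_prod by simp
  then have "poly Q x = 0" for x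
    using Suc.prems(1) by simp
  then have "Q = 0" using poly_all_0_iff_0 by blast
  moreover have "coeff Q (Suc N) = d (Suc N)"
    unfolding Q_def coeff_sum by (simp add: coeff_p)
  ultimately have d_top: "d (Suc N) = 0" by simp
  have "\<forall>x. (\<Sum>j\<le>N. d j * (\<Prod>i<j. x - c i)) = 0"
    using Suc.prems(1) by (simp add: d_top)
  with Suc.IH d_top Suc.prems(2) show ?case
    by (cases "j = Suc N") auto
qed

lemma gstirling_eq_gen_stirling:
  assumes "k \<le> n"
  shows "gstirling a b n k = gen_stirling a b n k"
proof -
  let ?expands = "\<lambda>c :: nat \<Rightarrow> real.
      (\<forall>x. (\<Prod>i<n. x + real i * a) = (\<Sum>j\<le>n. c j * (\<Prod>i<j. x - real i * b))) \<and> (\<forall>j>n. c j = 0)"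
  have "(THE c. ?expands c) = gen_stirling a b n"
  proof (rule the_equality)
    show "?expands (gen_stirling a b n)"
      using prod_rising_eq_sum_gen_stirling gen_stirling_eq_0 by blast
  next
    fix c assume c: "?expands c"
    show "c = gen_stirling a b n"
    proof
      fix j
      show "c j = gen_stirling a b n j"
      proof (cases "j \<le> n")
        case True
        have "\<forall>x. (\<Sum>j\<le>n. (c j - gen_stirling a b n j) * (\<Prod>i<j. x - real i * b)) = 0"
          using c prod_rising_eq_sum_gen_stirling[where a = a and b = b and n = n]
          by (simp add: left_diff_distrib sum_subtractf)
        from newton_basis_coeffs_eq_0[OF this True] show ?thesis by simp
      next
        case False
        with c show ?thesis by (simp add: gen_stirling_eq_0 not_le)
      qed
    qed
  qed
  then show ?thesis using assms by (simp add: gstirling_def)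
qed

lemma finite_weak_seqs: "finite (weak_seqs k n)"
proof (rule finite_subset)
  show "weak_seqs k n \<subseteq> {f. \<forall>x. (x \<in> {1..k} \<longrightarrow> f x \<in> {0..n}) \<and> (x \<notin> {1..k} \<longrightarrow> f x = 0)}"
    unfolding weak_seqs_def by auto
  show "finite {f. \<forall>x. (x \<in> {1..k} \<longrightarrow> f x \<in> {0..n}) \<and> (x \<notin> {1..k} \<longrightarrow> f x = (0::nat))}"
    by (rule finite_set_of_finite_funs) auto
qed

lemma weak_seqs_mono:
  assumes "i \<in> weak_seqs k n" "1 \<le> j" "j \<le> j'" "j' \<le> k"
  shows "i j \<le> i j'"
  using assms(3,4)
proof (induction j' rule: dec_induct)
  case base
  then show ?case by simp
next
  case (step m)
  then have "i m \<le> i (Suc m)" using assms(1,2) unfolding weak_seqs_def by auto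
  with step show ?case by simp
qed

lemma weak_seqs_0: "weak_seqs 0 n = {\<lambda>_. 0}"
  unfolding weak_seqs_def by auto

lemma weak_seqs_Suc_bound_0: "weak_seqs (Suc k) 0 = {}"
  unfolding weak_seqs_def by force

lemma fun_upd_Suc_in_weak_seqs:
  assumes f: "f \<in> weak_seqs k n" and "0 < n"
  shows "f(Suc k := n) \<in> weak_seqs (Suc k) n"
proof -
  have bounds: "1 \<le> f j \<and> f j \<le> n" if "j \<in> {1..k}" for j
    using f that unfolding weak_seqs_def by blast
  have mono: "f j \<le> f (Suc j)" if "j \<in> {1..<k}" for j
    using f that unfolding weak_seqs_def by blast
  have outside: "f j = 0" if "j \<notin> {1..k}" for j
    using f that unfolding weak_seqs_def by blast
  show ?thesis
    unfolding weak_seqs_def using bounds mono outside \<open>0 < n\<close>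
    by (auto simp: less_Suc_eq_le le_Suc_eq)
qed

lemma weak_seqs_Suc_Suc:
  "weak_seqs (Suc k) (Suc m) = weak_seqs (Suc k) m \<union> (\<lambda>f. f(Suc k := Suc m)) ` weak_seqs k (Suc m)"
proof (intro equalityI subsetI)
  fix i assume i: "i \<in> weak_seqs (Suc k) (Suc m)"
  show "i \<in> weak_seqs (Suc k) m \<union> (\<lambda>f. f(Suc k := Suc m)) ` weak_seqs k (Suc m)"
  proof (cases "i (Suc k) = Suc m")
    case True
    have "i(Suc k := 0) \<in> weak_seqs k (Suc m)" using i unfolding weak_seqs_def by auto
    moreover have "i = (i(Suc k := 0))(Suc k := Suc m)" using True by auto
    ultimately show ?thesis by blast
  next
    case False
    have "i (Suc k) \<le> Suc m" using i unfolding weak_seqs_def by auto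
    with False have "i (Suc k) \<le> m" by simp
    then have "i j \<le> m" if "j \<in> {1..Suc k}" for j
      using weak_seqs_mono[OF i, of j "Suc k"] that by auto
    then show ?thesis using i unfolding weak_seqs_def by auto
  qed
next
  fix i assume "i \<in> weak_seqs (Suc k) m \<union> (\<lambda>f. f(Suc k := Suc m)) ` weak_seqs k (Suc m)"
  then show "i \<in> weak_seqs (Suc k) (Suc m)"
    using fun_upd_Suc_in_weak_seqs[of _ k "Suc m"] unfolding weak_seqs_def by force
qed

definition weak_seq_weight_sum :: "nat \<Rightarrow> nat \<Rightarrow> nat \<Rightarrow> nat \<Rightarrow> nat" where
  "weak_seq_weight_sum \<alpha> \<beta> n k = (\<Sum>i\<in>weak_seqs k n. \<Prod>j=1..k. (\<alpha> + \<beta>) * i j + \<alpha> * (j - 1))"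

lemma weak_seq_weight_sum_0 [simp]: "weak_seq_weight_sum \<alpha> \<beta> n 0 = 1"
  unfolding weak_seq_weight_sum_def weak_seqs_0 by simp

lemma weak_seq_weight_sum_Suc_bound_0 [simp]: "weak_seq_weight_sum \<alpha> \<beta> 0 (Suc k) = 0"
  unfolding weak_seq_weight_sum_def weak_seqs_Suc_bound_0 by simp

lemma weak_seq_weight_sum_Suc_Suc:
  "weak_seq_weight_sum \<alpha> \<beta> (Suc m) (Suc k)
     = weak_seq_weight_sum \<alpha> \<beta> m (Suc k) + ((\<alpha> + \<beta>) * Suc m + \<alpha> * k) * weak_seq_weight_sum \<alpha> \<beta> (Suc m) k"
proof -
  define w where "w k i = (\<Prod>j=1..k. (\<alpha> + \<beta>) * i j + \<alpha> * (j - 1))" for k i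
  define ext where "ext f = f(Suc k := Suc m)" for f :: "nat \<Rightarrow> nat"
  have last_0: "f (Suc k) = 0" if "f \<in> weak_seqs k (Suc m)" for f
    using that unfolding weak_seqs_def by auto
  have "i (Suc k) \<le> m" if "i \<in> weak_seqs (Suc k) m" for i
    using that unfolding weak_seqs_def by auto
  then have disjoint: "weak_seqs (Suc k) m \<inter> ext ` weak_seqs k (Suc m) = {}"
    unfolding ext_def by fastforce
  have "inj_on ext (weak_seqs k (Suc m))"
  proof
    fix f g assume "f \<in> weak_seqs k (Suc m)" "g \<in> weak_seqs k (Suc m)" "ext f = ext g"
    then show "f = g"
      using last_0 unfolding ext_def by (metis fun_upd_idem fun_upd_upd)
  qed
  then have "sum (w (Suc k)) (ext ` weak_seqs k (Suc m)) = (\<Sum>f\<in>weak_seqs k (Suc m). w (Suc k) (ext f))"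
    by (simp add: sum.reindex)
  also have "\<dots> = (\<Sum>f\<in>weak_seqs k (Suc m). ((\<alpha> + \<beta>) * Suc m + \<alpha> * k) * w k f)"
  proof (rule sum.cong[OF refl])
    fix f
    have "w k (ext f) = w k f" unfolding w_def ext_def by (rule prod.cong) auto
    then show "w (Suc k) (ext f) = ((\<alpha> + \<beta>) * Suc m + \<alpha> * k) * w k f"
      by (simp add: w_def prod.cl_ivl_Suc ext_def)
  qed
  finally show ?thesis
    unfolding weak_seq_weight_sum_def w_def[symmetric] weak_seqs_Suc_Suc ext_def[symmetric]
    using disjoint by (simp add: sum.union_disjoint finite_weak_seqs sum_distrib_left)
qed

lemma gen_stirling_eq_weak_seq_weight_sum:
  "gen_stirling \<alpha> \<beta> (n + k) n = weak_seq_weight_sum \<alpha> \<beta> n k"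
proof (induction k arbitrary: n)
  case 0
  then show ?case by simp
next
  case (Suc k)
  note IH_k = Suc.IH
  show ?case
  proof (induction n)
    case 0
    then show ?case by (simp del: gen_stirling.simps)
  next
    case (Suc m)
    have "gen_stirling \<alpha> \<beta> (Suc m + Suc k) (Suc m)
        = gen_stirling \<alpha> \<beta> (m + Suc k) m + (Suc m * \<beta> + (m + Suc k) * \<alpha>) * gen_stirling \<alpha> \<beta> (Suc m + k) (Suc m)"
      by simp
    also have "\<dots> = weak_seq_weight_sum \<alpha> \<beta> m (Suc k)
                   + ((\<alpha> + \<beta>) * Suc m + \<alpha> * k) * weak_seq_weight_sum \<alpha> \<beta> (Suc m) k"
      using Suc.IH IH_k[of "Suc m"] by (simp add: algebra_simps)
    finally show ?case by (simp add: weak_seq_weight_sum_Suc_Suc)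
  qed
qed

theorem theorem6:
  fixes n k \<alpha> \<beta> :: nat
  shows "gstirling (real \<alpha>) (real \<beta>) (n + k) n
           = real (\<Sum>i\<in>weak_seqs k n. \<Prod>j=1..k. (\<alpha> + \<beta>) * i j + \<alpha> * (j - 1))"
proof -
  have "gstirling (real \<alpha>) (real \<beta>) (n + k) n = real (gen_stirling \<alpha> \<beta> (n + k) n)"
    by (simp add: gstirling_eq_gen_stirling of_nat_gen_stirling)
  then show ?thesis
    by (simp add: gen_stirling_eq_weak_seq_weight_sum weak_seq_weight_sum_def)
qed

end
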